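(* There is an absolute constant $c > 0$ such that for every integer $L \geq 2$, every $m$, and every $\lambda \in [m]^{L+1}$ with pairwise distinct entries, the following holds: if $\lambda = \tau^0, \tau^1, \ldots, \tau^N$ is any sequence of states such that for each $s \in [N]$, $\tau^s = (j_s - 1, j_s)\tau^{s-1}$ for some $j_s \in \{1,\ldots,L\}$, and $\tau^N_L = \lambda_0$, then there exists $s \in \{0,\ldots,N\}$ such that $|\{\ell \in \{0,\ldots,L\} : \tau^s_\ell \neq \lambda_\ell\}| \geq c\log L$.
   Context: States are vectors $\tau = (\tau_0, \ldots, \tau_L) \in [m]^{L+1}$ (coordinate $\ell$ is level $\ell$); $(a,b)\tau$ denotes $\tau$ with the entries at levels $a$ and $b$ exchanged. Thus the sequence transforms $\lambda$ into a state whose level-$L$ entry is the original level-0 entry, using only swaps of adjacent levels. *)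

theory Defs
  imports Complex_Main
begin

definition swap_levels :: "nat \<Rightarrow> nat \<Rightarrow> nat list \<Rightarrow> nat list" where
  "swap_levels a b t = t[a := t ! b, b := t ! a]"

end

theory Submission
  imports Defs "HOL-Combinatorics.Permutations"
begin

(* Record the state at time t by the permutation \<sigma> t of levels with tau t ! l = lam ! \<sigma> t l,
   so that inv (\<sigma> t) y is the current level of the entry that started at level y; an adjacent
   swap moves every entry by at most one level. Call a window of levels clean at time t if \<sigma> t
   fixes it pointwise.

   Claim (crossing_bound), by induction on k: if an entry from outside a clean window of 2^k
   levels enters it from below and reaches its top level, then at some moment more than k levels
   of the window are displaced. Split a window of 2^(k+1) levels into halves and let r be the last
   moment the upper half is clean before the entry first reaches the top; afterwards the upper
   half stays dirty and, by induction, at some moment w has k+1 displaced levels. Unless the lower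
   half is dirty at w, let c be the first moment from r on at which the lower half is clean. If
   the entry is then below it, induction on the lower half gives k+1 displaced levels there.
   Otherwise the entry crossed the middle upward between r and c, so by counting some other entry
   crossed it downward, and the time-reversed or mirrored claim gives k+1 displaced levels in one
   half while the other is dirty.

   The entry lam ! 0 travels from level 0 to level L through the window 1..L, clean at time 0;
   with 2^k <= L < 2^(k+1) the claim gives k+1 >= ln L displaced levels. *)

lemma least_after:
  fixes P :: "nat \<Rightarrow> bool"
  assumes "r \<le> w" "P w"
  obtains c where "r \<le> c" "c \<le> w" "P c" "\<And>t. r \<le> t \<Longrightarrow> t < c \<Longrightarrow> \<not> P t"
proof
  let ?c = "LEAST t. r \<le> t \<and> P t"
  show "r \<le> ?c" "P ?c"
    using LeastI[of "\<lambda>t. r \<le> t \<and> P t" w] assms by auto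
  show "?c \<le> w"
    using Least_le[of "\<lambda>t. r \<le> t \<and> P t" w] assms by auto
  show "\<not> P t" if "r \<le> t" "t < ?c" for t
    using not_less_Least[of t "\<lambda>t. r \<le> t \<and> P t"] that by auto
qed

lemma greatest_before:
  fixes P :: "nat \<Rightarrow> bool"
  assumes "a \<le> s" "P a"
  obtains r where "a \<le> r" "r \<le> s" "P r" "\<And>t. r < t \<Longrightarrow> t \<le> s \<Longrightarrow> \<not> P t"
proof
  let ?r = "GREATEST t. t \<le> s \<and> P t"
  show "a \<le> ?r"
    using Greatest_le_nat[of "\<lambda>t. t \<le> s \<and> P t" a s] assms by auto
  show "?r \<le> s" "P ?r"
    using GreatestI_nat[of "\<lambda>t. t \<le> s \<and> P t" a s] assms by auto
  show "\<not> P t" if "?r < t" "t \<le> s" for t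
    using Greatest_le_nat[of "\<lambda>t. t \<le> s \<and> P t" t s] that by auto
qed

lemma first_reach:
  fixes P :: "nat \<Rightarrow> nat"
  assumes "a \<le> b" "P a < h" "h \<le> P b"
    and step: "\<And>t. a \<le> t \<Longrightarrow> t < b \<Longrightarrow> P (Suc t) \<le> Suc (P t)"
  obtains s where "a < s" "s \<le> b" "P s = h" "\<And>t. a \<le> t \<Longrightarrow> t < s \<Longrightarrow> P t < h"
proof -
  obtain s where s: "a \<le> s" "s \<le> b" "h \<le> P s" and before: "\<And>t. a \<le> t \<Longrightarrow> t < s \<Longrightarrow> P t < h"
    using least_after[of a b "\<lambda>t. h \<le> P t"] assms(1,3) by (metis not_le)
  have "a < s"
    using s(1,3) assms(2) by (cases "s = a") auto
  then obtain t where "s = Suc t" "a \<le> t"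
    by (cases s) auto
  then have "P s = h"
    using step[of t] before[of t] s by auto
  then show ?thesis
    using that \<open>a < s\<close> s before by blast
qed

lemma permutation_cut_exchange:
  fixes f g :: "nat \<Rightarrow> 'a"
  assumes "bij f" "bij g" "inv f y < m" "m \<le> inv g y"
  obtains u where "inv g u < m" "m \<le> inv f u"
proof -
  have "card (g ` {..<m}) = card (f ` {..<m})"
    using card_image[OF inj_on_subset[OF bij_is_inj]] assms(1,2) by (metis subset_UNIV)
  moreover have "y \<in> f ` {..<m}"
    using assms(3) surj_f_inv_f[OF bij_is_surj[OF assms(1)], of y] by (metis image_eqI lessThan_iff)
  moreover have "y \<notin> g ` {..<m}"
  proof
    assume "y \<in> g ` {..<m}"
    then obtain x where "x < m" "y = g x"
      by blast
    then show False
      using assms(4) inv_f_f[OF bij_is_inj[OF assms(2)], of x] by simp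
  qed
  ultimately have "\<not> g ` {..<m} \<subseteq> f ` {..<m}"
    using card_subset_eq[of "f ` {..<m}" "g ` {..<m}"] by auto
  then obtain q where q: "q < m" "g q \<notin> f ` {..<m}"
    by auto
  show ?thesis
  proof (rule that)
    show "inv g (g q) < m"
      using q assms(2) by (simp add: bij_is_inj)
    show "m \<le> inv f (g q)"
    proof (rule ccontr)
      assume "\<not> m \<le> inv f (g q)"
      then have "g q \<in> f ` {..<m}"
        using bij_inv_eq_iff[OF assms(1)] by (metis image_eqI lessThan_iff not_le)
      then show False
        using q(2) by blast
    qed
  qed
qed

definition adjacent_step :: "nat \<Rightarrow> (nat \<Rightarrow> nat) \<Rightarrow> (nat \<Rightarrow> nat) \<Rightarrow> bool" where
  "adjacent_step n f g \<longleftrightarrow> (\<exists>j. Suc j < n \<and> g = f \<circ> transpose j (Suc j))"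

definition adjacent_walk :: "nat \<Rightarrow> (nat \<Rightarrow> nat \<Rightarrow> nat) \<Rightarrow> nat \<Rightarrow> nat \<Rightarrow> bool" where
  "adjacent_walk n \<sigma> a b \<longleftrightarrow>
     a \<le> b \<and> \<sigma> a permutes {..<n} \<and> (\<forall>t\<in>{a..<b}. adjacent_step n (\<sigma> t) (\<sigma> (Suc t)))"

lemma adjacent_step_sym: "adjacent_step n f g \<Longrightarrow> adjacent_step n g f"
  unfolding adjacent_step_def by (auto simp: comp_assoc)

lemma adjacent_step_permutes:
  "f permutes {..<n} \<Longrightarrow> adjacent_step n f g \<Longrightarrow> g permutes {..<n}"
  unfolding adjacent_step_def by (auto intro!: permutes_compose[OF permutes_swap_id])

lemma adjacent_step_inv:
  assumes "f permutes {..<n}" "adjacent_step n f g"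
  shows "inv g y \<le> Suc (inv f y) \<and> inv f y \<le> Suc (inv g y)"
proof -
  obtain j where "g = f \<circ> transpose j (Suc j)"
    using assms(2) unfolding adjacent_step_def by blast
  then have "inv g y = transpose j (Suc j) (inv f y)"
    using assms(1) by (simp add: o_inv_distrib permutes_bij)
  then show ?thesis
    by (auto simp: transpose_def)
qed

lemma adjacent_walk_permutes:
  assumes walk: "adjacent_walk n \<sigma> a b" and "a \<le> t" "t \<le> b"
  shows "\<sigma> t permutes {..<n}"
  using assms(2,3)
proof (induction t rule: dec_induct)
  case base
  then show ?case using walk by (simp add: adjacent_walk_def)
next
  case (step t)
  then show ?case using walk by (auto simp: adjacent_walk_def intro: adjacent_step_permutes)
qed

lemma adjacent_walk_bij: "adjacent_walk n \<sigma> a b \<Longrightarrow> a \<le> t \<Longrightarrow> t \<le> b \<Longrightarrow> bij (\<sigma> t)"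
  using adjacent_walk_permutes permutes_bij by blast

lemma adjacent_walk_inv_Suc:
  assumes "adjacent_walk n \<sigma> a b" "a \<le> t" "t < b"
  shows "inv (\<sigma> (Suc t)) y \<le> Suc (inv (\<sigma> t) y) \<and> inv (\<sigma> t) y \<le> Suc (inv (\<sigma> (Suc t)) y)"
  using assms adjacent_walk_permutes[OF assms(1)]
  by (intro adjacent_step_inv) (auto simp: adjacent_walk_def)

lemma adjacent_walk_subwalk:
  assumes "adjacent_walk n \<sigma> a b" "a \<le> a'" "a' \<le> b'" "b' \<le> b"
  shows "adjacent_walk n \<sigma> a' b'"
  using assms adjacent_walk_permutes[OF assms(1)] by (auto simp: adjacent_walk_def)

lemma adjacent_walk_reverse:
  assumes walk: "adjacent_walk n \<sigma> a b"
  shows "adjacent_walk n (\<lambda>t. \<sigma> (a + b - t)) a b"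
  unfolding adjacent_walk_def
proof (intro conjI ballI)
  show "a \<le> b" "\<sigma> (a + b - a) permutes {..<n}"
    using walk adjacent_walk_permutes[OF walk] by (auto simp: adjacent_walk_def)
next
  fix t assume t: "t \<in> {a..<b}"
  then have "a + b - Suc t \<in> {a..<b}"
    by auto
  then have "adjacent_step n (\<sigma> (a + b - Suc t)) (\<sigma> (Suc (a + b - Suc t)))"
    using walk by (simp add: adjacent_walk_def)
  moreover have "Suc (a + b - Suc t) = a + b - t"
    using t by auto
  ultimately show "adjacent_step n (\<sigma> (a + b - t)) (\<sigma> (a + b - Suc t))"
    by (simp add: adjacent_step_sym)
qed

lemma adjacent_walk_first_reach:
  assumes walk: "adjacent_walk n \<sigma> a b" and "inv (\<sigma> a) y < h" "h \<le> inv (\<sigma> b) y"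
  obtains s where "a < s" "s \<le> b" "inv (\<sigma> s) y = h"
    "\<And>t. a \<le> t \<Longrightarrow> t < s \<Longrightarrow> inv (\<sigma> t) y < h"
proof (rule first_reach[of a b "\<lambda>t. inv (\<sigma> t) y" h])
  show "a \<le> b" "inv (\<sigma> a) y < h" "h \<le> inv (\<sigma> b) y"
    using assms by (simp_all add: adjacent_walk_def)
  show "inv (\<sigma> (Suc t)) y \<le> Suc (inv (\<sigma> t) y)" if "a \<le> t" "t < b" for t
    using adjacent_walk_inv_Suc[OF walk that] by blast
qed (rule that)

definition mirror :: "nat \<Rightarrow> nat \<Rightarrow> nat" where
  "mirror n p = (if p < n then n - Suc p else p)"

lemma mirror_mirror [simp]: "mirror n (mirror n p) = p"
  by (simp add: mirror_def)

lemma mirror_permutes: "mirror n permutes {..<n}"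
  unfolding permutes_def by (metis mirror_def mirror_mirror lessThan_iff)

lemma inj_mirror: "inj (mirror n)"
  by (metis injI mirror_mirror)

lemma inv_mirror [simp]: "inv (mirror n) = mirror n"
  by (rule inv_unique_comp) (auto simp: fun_eq_iff)

lemma mirror_transpose_mirror:
  "Suc j < n \<Longrightarrow>
    mirror n \<circ> transpose j (Suc j) \<circ> mirror n = transpose (n - 2 - j) (Suc (n - 2 - j))"
  by (auto simp: fun_eq_iff mirror_def transpose_def)

lemma adjacent_step_mirror:
  assumes "adjacent_step n f g"
  shows "adjacent_step n (mirror n \<circ> f \<circ> mirror n) (mirror n \<circ> g \<circ> mirror n)"
proof -
  obtain j where j: "Suc j < n" "g = f \<circ> transpose j (Suc j)"
    using assms unfolding adjacent_step_def by blast
  have "mirror n \<circ> g \<circ> mirror n =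
      (mirror n \<circ> f \<circ> mirror n) \<circ> (mirror n \<circ> transpose j (Suc j) \<circ> mirror n)"
    by (simp add: j fun_eq_iff)
  also have "\<dots> = (mirror n \<circ> f \<circ> mirror n) \<circ> transpose (n - 2 - j) (Suc (n - 2 - j))"
    using mirror_transpose_mirror[OF j(1)] by simp
  finally show ?thesis
    using j unfolding adjacent_step_def by (intro exI[of _ "n - 2 - j"]) auto
qed

lemma adjacent_walk_mirror:
  "adjacent_walk n \<sigma> a b \<Longrightarrow> adjacent_walk n (\<lambda>t. mirror n \<circ> \<sigma> t \<circ> mirror n) a b"
  unfolding adjacent_walk_def
  by (auto intro: adjacent_step_mirror permutes_compose mirror_permutes)

lemma inv_mirror_conj:
  "f permutes {..<n} \<Longrightarrow> inv (mirror n \<circ> f \<circ> mirror n) y = mirror n (inv f (mirror n y))"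
proof -
  assume "f permutes {..<n}"
  then have "bij f" "bij (mirror n)"
    using mirror_permutes[of n] by (auto intro: permutes_bij)
  then show ?thesis
    by (simp add: o_inv_distrib bij_comp)
qed

definition displaced :: "(nat \<Rightarrow> nat) \<Rightarrow> nat \<Rightarrow> nat \<Rightarrow> nat set" where
  "displaced f lo hi = {p \<in> {lo..<hi}. f p \<noteq> p}"

lemma finite_displaced [simp]: "finite (displaced f lo hi)"
  by (simp add: displaced_def)

lemma card_displaced_split:
  assumes "lo \<le> mid" "mid \<le> hi"
  shows "card (displaced f lo hi) = card (displaced f lo mid) + card (displaced f mid hi)"
proof -
  have "displaced f lo hi = displaced f lo mid \<union> displaced f mid hi"
    using assms by (auto simp: displaced_def)
  moreover have "displaced f lo mid \<inter> displaced f mid hi = {}"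
    by (auto simp: displaced_def)
  ultimately show ?thesis
    by (simp add: card_Un_disjoint)
qed

lemma card_displaced_halves:
  assumes "lo \<le> mid" "mid \<le> hi" "displaced f mid hi \<noteq> {}"
    and "k < card (displaced f lo mid) \<or> k < card (displaced f mid hi) \<and> displaced f lo mid \<noteq> {}"
  shows "Suc k < card (displaced f lo hi)"
proof -
  have "0 < card (displaced f mid hi)"
    using assms(3) by (simp add: card_gt_0_iff)
  moreover have "0 < card (displaced f lo mid)" if "\<not> k < card (displaced f lo mid)"
    using that assms(4) by (simp add: card_gt_0_iff)
  ultimately show ?thesis
    using assms(4) card_displaced_split[OF assms(1,2), of f] by linarith
qed

lemma inv_in_clean_window_iff:
  assumes "bij f" "displaced f lo hi = {}"
  shows "inv f y \<in> {lo..<hi} \<longleftrightarrow> y \<in> {lo..<hi}"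
proof
  have fixed: "f p = p" if "p \<in> {lo..<hi}" for p
    using assms(2) that by (auto simp: displaced_def)
  show "y \<in> {lo..<hi}" if "inv f y \<in> {lo..<hi}"
    using fixed[OF that] that bij_inv_eq_iff[OF assms(1)] by metis
  show "inv f y \<in> {lo..<hi}" if "y \<in> {lo..<hi}"
    using fixed[OF that] that bij_inv_eq_iff[OF assms(1)] by metis
qed

lemma displaced_mirror_conj:
  assumes "hi \<le> n"
  shows "displaced (mirror n \<circ> f \<circ> mirror n) (n - hi) (n - lo) = mirror n ` displaced f lo hi"
proof (intro equalityI subsetI)
  fix p assume "p \<in> displaced (mirror n \<circ> f \<circ> mirror n) (n - hi) (n - lo)"
  then have "mirror n p \<in> displaced f lo hi"
    using assms by (auto simp: displaced_def mirror_def split: if_splits)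
  then show "p \<in> mirror n ` displaced f lo hi"
    by (metis image_eqI mirror_mirror)
next
  fix p assume "p \<in> mirror n ` displaced f lo hi"
  then obtain q where "q \<in> displaced f lo hi" "p = mirror n q"
    by blast
  then show "p \<in> displaced (mirror n \<circ> f \<circ> mirror n) (n - hi) (n - lo)"
    using assms by (auto simp: displaced_def mirror_def split: if_splits)
qed

definition crossing_bound :: "nat \<Rightarrow> nat \<Rightarrow> bool" where
  "crossing_bound n k \<longleftrightarrow>
    (\<forall>\<sigma> lo hi a b y. 2 ^ k \<le> hi - lo \<longrightarrow> hi \<le> n \<longrightarrow> adjacent_walk n \<sigma> a b \<longrightarrow>
       displaced (\<sigma> a) lo hi = {} \<longrightarrow> inv (\<sigma> a) y < lo \<longrightarrow> hi - 1 \<le> inv (\<sigma> b) y \<longrightarrow>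
       (\<exists>t\<in>{a<..b}. k < card (displaced (\<sigma> t) lo hi)))"

lemma crossing_boundD:
  assumes "crossing_bound n k" "2 ^ k \<le> hi - lo" "hi \<le> n" "adjacent_walk n \<sigma> a b"
    "displaced (\<sigma> a) lo hi = {}" "inv (\<sigma> a) y < lo" "hi - 1 \<le> inv (\<sigma> b) y"
  obtains t where "a < t" "t \<le> b" "k < card (displaced (\<sigma> t) lo hi)"
  using assms(1)[unfolded crossing_bound_def, rule_format, OF assms(2-7)] that by auto

lemma crossing_bound_reversed:
  assumes "crossing_bound n k" "2 ^ k \<le> hi - lo" "hi \<le> n" "adjacent_walk n \<sigma> a b"
    "displaced (\<sigma> b) lo hi = {}" "inv (\<sigma> b) y < lo" "hi - 1 \<le> inv (\<sigma> a) y"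
  obtains t where "a \<le> t" "t < b" "k < card (displaced (\<sigma> t) lo hi)"
proof -
  have "a \<le> b"
    using assms(4) by (simp add: adjacent_walk_def)
  then have "displaced (\<sigma> (a + b - a)) lo hi = {}" "inv (\<sigma> (a + b - a)) y < lo"
    "hi - 1 \<le> inv (\<sigma> (a + b - b)) y"
    using assms(5-7) by simp_all
  then obtain t where "a < t" "t \<le> b" "k < card (displaced (\<sigma> (a + b - t)) lo hi)"
    by (rule crossing_boundD[OF assms(1-3) adjacent_walk_reverse[OF assms(4)]])
  then show ?thesis
    using that[of "a + b - t"] by simp
qed

lemma crossing_bound_downward:
  assumes "crossing_bound n k" "2 ^ k \<le> hi - lo" "hi \<le> n" and walk: "adjacent_walk n \<sigma> a b"
    and clean: "displaced (\<sigma> a) lo hi = {}" and start: "hi \<le> inv (\<sigma> a) y"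
    and finish: "inv (\<sigma> b) y \<le> lo"
  obtains t where "a < t" "t \<le> b" "k < card (displaced (\<sigma> t) lo hi)"
proof -
  let ?\<mu> = "\<lambda>t. mirror n \<circ> \<sigma> t \<circ> mirror n"
  have ab: "a \<le> b"
    using walk by (simp add: adjacent_walk_def)
  have perm: "\<sigma> t permutes {..<n}" if "a \<le> t" "t \<le> b" for t
    using adjacent_walk_permutes[OF walk that] .
  have "lo < hi"
    using assms(2) one_le_power[of "2::nat" k] by linarith
  then have "inv (\<sigma> b) y < n"
    using finish assms(3) by linarith
  then have "inv (\<sigma> a) y < n"
    using permutes_in_image[OF permutes_inv[OF perm[of b]], of y]
      permutes_in_image[OF permutes_inv[OF perm[of a]], of y] ab
    by simp
  then have mirrored: "inv (?\<mu> t) (mirror n y) = n - Suc (inv (\<sigma> t) y)"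
    if "t \<in> {a, b}" for t
    using that perm ab \<open>inv (\<sigma> b) y < n\<close>
    by (auto simp: inv_mirror_conj mirror_def)
  have card_eq: "card (displaced (?\<mu> t) (n - hi) (n - lo)) = card (displaced (\<sigma> t) lo hi)" for t
    using assms(3) inj_on_subset[OF inj_mirror subset_UNIV]
    by (simp add: displaced_mirror_conj card_image)
  obtain t where "a < t" "t \<le> b" "k < card (displaced (?\<mu> t) (n - hi) (n - lo))"
  proof (rule crossing_boundD[OF assms(1) _ _ adjacent_walk_mirror[OF walk], of "n - lo" "n - hi"])
    show "2 ^ k \<le> n - lo - (n - hi)" "n - lo \<le> n"
      using assms(2,3) by auto
    show "displaced (?\<mu> a) (n - hi) (n - lo) = {}"
      using clean assms(3) by (simp add: displaced_mirror_conj)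
    show "inv (?\<mu> a) (mirror n y) < n - hi"
      using mirrored[of a] start \<open>inv (\<sigma> a) y < n\<close> by auto
    show "n - lo - 1 \<le> inv (?\<mu> b) (mirror n y)"
      using mirrored[of b] finish by auto
  qed
  then show ?thesis
    using that card_eq by auto
qed

lemma crossing_bound_0: "crossing_bound n 0"
  unfolding crossing_bound_def
proof (intro allI impI)
  fix \<sigma> lo hi a b y
  assume "2 ^ 0 \<le> hi - lo" "hi \<le> n" and walk: "adjacent_walk n \<sigma> a b"
    and clean: "displaced (\<sigma> a) lo hi = {}" and start: "inv (\<sigma> a) y < lo"
    and finish: "hi - 1 \<le> inv (\<sigma> b) y"
  have "lo < hi"
    using \<open>2 ^ 0 \<le> hi - lo\<close> by simp
  have "a \<le> b"
    using walk by (simp add: adjacent_walk_def)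
  have y: "y \<notin> {lo..<hi}"
    using inv_in_clean_window_iff[OF adjacent_walk_bij[OF walk order.refl \<open>a \<le> b\<close>] clean, of y]
      start by auto
  have "inv (\<sigma> a) y < hi - 1"
    using start \<open>lo < hi\<close> by linarith
  then obtain s where s: "a < s" "s \<le> b" "inv (\<sigma> s) y = hi - 1"
    by (rule adjacent_walk_first_reach[OF walk _ finish]) (rule that)
  then have "displaced (\<sigma> s) lo hi \<noteq> {}"
    using inv_in_clean_window_iff[OF adjacent_walk_bij[OF walk], of s lo hi y] y \<open>lo < hi\<close> by auto
  then show "\<exists>t\<in>{a<..b}. 0 < card (displaced (\<sigma> t) lo hi)"
    using s by (auto simp: card_gt_0_iff)
qed

lemma crossing_bound_exchange:
  assumes IH: "crossing_bound n k"
    and sizes: "2 ^ k \<le> mid - lo" "2 ^ k \<le> hi - mid" "hi \<le> n"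
    and walk: "adjacent_walk n \<sigma> r b" and "r < b"
    and upper_clean: "displaced (\<sigma> r) mid hi = {}" and lower_clean: "displaced (\<sigma> b) lo mid = {}"
    and "inv (\<sigma> r) y < mid" "mid \<le> inv (\<sigma> b) y"
  obtains s where "r < s" "s < b"
    "k < card (displaced (\<sigma> s) lo mid) \<or> k < card (displaced (\<sigma> s) mid hi)"
proof -
  have bij_r: "bij (\<sigma> r)" and bij_b: "bij (\<sigma> b)"
    using adjacent_walk_bij[OF walk] \<open>r < b\<close> by auto
  have "mid < hi"
    using sizes(2) one_le_power[of "2::nat" k] by linarith
  obtain u where u_b: "inv (\<sigma> b) u < mid" and u_r: "mid \<le> inv (\<sigma> r) u"
    using permutation_cut_exchange[OF bij_r bij_b assms(9,10)] by blast
  show ?thesis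
  proof (cases "inv (\<sigma> r) u < hi")
    case True
    then have "u \<in> {mid..<hi}"
      using inv_in_clean_window_iff[OF bij_r upper_clean, of u] u_r by simp
    then have end_below: "inv (\<sigma> b) u < lo"
      using inv_in_clean_window_iff[OF bij_b lower_clean, of u] u_b by auto
    have start_above: "mid - 1 \<le> inv (\<sigma> (Suc r)) u"
      using adjacent_walk_inv_Suc[OF walk order.refl \<open>r < b\<close>, of u] u_r by linarith
    have subwalk: "adjacent_walk n \<sigma> (Suc r) b"
      using adjacent_walk_subwalk[OF walk] \<open>r < b\<close> by simp
    have "mid \<le> n"
      using \<open>mid < hi\<close> sizes(3) by simp
    obtain s where "Suc r \<le> s" "s < b" "k < card (displaced (\<sigma> s) lo mid)"
      by (rule crossing_bound_reversed[OF IH sizes(1) \<open>mid \<le> n\<close> subwalk lower_clean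
            end_below start_above])
    then show ?thesis
      using that[of s] by simp
  next
    case False
    have "r \<le> b - 1" "b - 1 < b" "Suc (b - 1) = b"
      using \<open>r < b\<close> by auto
    then have end_below: "inv (\<sigma> (b - 1)) u \<le> mid"
      using adjacent_walk_inv_Suc[OF walk, of "b - 1" u] u_b by simp
    have subwalk: "adjacent_walk n \<sigma> r (b - 1)"
      using adjacent_walk_subwalk[OF walk] \<open>r < b\<close> by simp
    have start_above: "hi \<le> inv (\<sigma> r) u"
      using False by simp
    obtain s where "r < s" "s \<le> b - 1" "k < card (displaced (\<sigma> s) mid hi)"
      by (rule crossing_bound_downward[OF IH sizes(2,3) subwalk upper_clean start_above end_below])
    then show ?thesis
      using that[of s] \<open>r < b\<close> by simp
  qed
qed

lemma crossing_bound_Suc_lower_clean: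
  assumes IH: "crossing_bound n k"
    and sizes: "2 ^ k \<le> mid - lo" "2 ^ k \<le> hi - mid" "hi \<le> n"
    and walk: "adjacent_walk n \<sigma> r b" and y: "y \<notin> {lo..<hi}"
    and upper_clean: "displaced (\<sigma> r) mid hi = {}"
    and start: "inv (\<sigma> r) y < mid" and finish: "hi - 1 \<le> inv (\<sigma> b) y"
    and c: "r \<le> c" "c \<le> b" "displaced (\<sigma> c) lo mid = {}"
    and lower_dirty: "\<And>t. r \<le> t \<Longrightarrow> t < c \<Longrightarrow> displaced (\<sigma> t) lo mid \<noteq> {}"
  obtains t where "r < t" "t \<le> b" "k < card (displaced (\<sigma> t) lo mid) \<or>
    k < card (displaced (\<sigma> t) mid hi) \<and> displaced (\<sigma> t) lo mid \<noteq> {}"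
proof -
  have "mid < hi"
    using sizes(2) one_le_power[of "2::nat" k] by linarith
  have "inv (\<sigma> c) y \<notin> {lo..<mid}"
    using inv_in_clean_window_iff[OF adjacent_walk_bij[OF walk c(1,2)] c(3), of y] y \<open>mid < hi\<close>
    by auto
  then consider "inv (\<sigma> c) y < lo" | "mid \<le> inv (\<sigma> c) y"
    by fastforce
  then show thesis
  proof cases
    case 1
    have "mid \<le> n" and finish_mid: "mid - 1 \<le> inv (\<sigma> b) y"
      using finish \<open>mid < hi\<close> sizes(3) by linarith+
    have subwalk: "adjacent_walk n \<sigma> c b"
      using adjacent_walk_subwalk[OF walk c(1,2) order.refl] .
    obtain t where "c < t" "t \<le> b" "k < card (displaced (\<sigma> t) lo mid)"
      by (rule crossing_boundD[OF IH sizes(1) \<open>mid \<le> n\<close> subwalk c(3) 1 finish_mid])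
    then show ?thesis
      using that[of t] c(1) by simp
  next
    case 2
    then have "r < c"
      using start c(1) by (cases "r = c") auto
    have subwalk: "adjacent_walk n \<sigma> r c"
      using adjacent_walk_subwalk[OF walk order.refl c(1,2)] .
    obtain s where "r < s" "s < c"
      "k < card (displaced (\<sigma> s) lo mid) \<or> k < card (displaced (\<sigma> s) mid hi)"
      by (rule crossing_bound_exchange[OF IH sizes subwalk \<open>r < c\<close> upper_clean c(3) start 2])
    then show ?thesis
      using that[of s] lower_dirty[of s] c(2) by auto
  qed
qed

lemma crossing_bound_Suc_after_last_clean:
  assumes IH: "crossing_bound n k"
    and sizes: "2 ^ k \<le> mid - lo" "2 ^ k \<le> hi - mid" "hi \<le> n"
    and walk: "adjacent_walk n \<sigma> r b" and y: "y \<notin> {lo..<hi}"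
    and upper_clean: "displaced (\<sigma> r) mid hi = {}"
    and upper_dirty: "\<And>t. r < t \<Longrightarrow> t \<le> b \<Longrightarrow> displaced (\<sigma> t) mid hi \<noteq> {}"
    and start: "inv (\<sigma> r) y < mid" and finish: "hi - 1 \<le> inv (\<sigma> b) y"
  obtains t where "r < t" "t \<le> b" "Suc k < card (displaced (\<sigma> t) lo hi)"
proof -
  have "lo < mid" "mid < hi"
    using sizes(1,2) one_le_power[of "2::nat" k] by linarith+
  obtain w where w: "r < w" "w \<le> b" "k < card (displaced (\<sigma> w) mid hi)"
    by (rule crossing_boundD[OF IH sizes(2,3) walk upper_clean start finish])
  obtain t where t: "r < t" "t \<le> b" and halves: "k < card (displaced (\<sigma> t) lo mid) \<or>
    k < card (displaced (\<sigma> t) mid hi) \<and> displaced (\<sigma> t) lo mid \<noteq> {}"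
  proof (cases "displaced (\<sigma> w) lo mid = {}")
    case True
    then obtain c where c: "r \<le> c" "c \<le> w" "displaced (\<sigma> c) lo mid = {}"
      and lower_dirty: "\<And>t. r \<le> t \<Longrightarrow> t < c \<Longrightarrow> displaced (\<sigma> t) lo mid \<noteq> {}"
      using least_after[of r w "\<lambda>t. displaced (\<sigma> t) lo mid = {}"] w(1) by auto
    have "c \<le> b"
      using c(2) w(2) by simp
    show ?thesis
      using crossing_bound_Suc_lower_clean[OF IH sizes walk y upper_clean start finish c(1)
          \<open>c \<le> b\<close> c(3) lower_dirty] that by blast
  next
    case False
    then show ?thesis
      using that w by blast
  qed
  then show thesis
    using that card_displaced_halves[OF _ _ upper_dirty[OF t] halves] \<open>lo < mid\<close> \<open>mid < hi\<close>
    by simp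
qed

lemma crossing_bound_Suc:
  assumes IH: "crossing_bound n k"
  shows "crossing_bound n (Suc k)"
  unfolding crossing_bound_def
proof (intro allI impI)
  fix \<sigma> lo hi a b y
  assume size: "2 ^ Suc k \<le> hi - lo" and "hi \<le> n" and walk: "adjacent_walk n \<sigma> a b"
    and clean: "displaced (\<sigma> a) lo hi = {}" and start: "inv (\<sigma> a) y < lo"
    and finish: "hi - 1 \<le> inv (\<sigma> b) y"
  define mid where "mid = lo + 2 ^ k"
  have sizes: "2 ^ k \<le> mid - lo" "2 ^ k \<le> hi - mid"
    using size by (auto simp: mid_def)
  have "lo < mid" "mid < hi"
    using sizes one_le_power[of "2::nat" k] by linarith+
  have "a \<le> b"
    using walk by (simp add: adjacent_walk_def)
  have bij: "bij (\<sigma> t)" if "a \<le> t" "t \<le> b" for t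
    using adjacent_walk_bij[OF walk that] .
  have y: "y \<notin> {lo..<hi}"
    using inv_in_clean_window_iff[OF bij[OF order.refl \<open>a \<le> b\<close>] clean, of y] start by auto
  have "inv (\<sigma> a) y < hi - 1"
    using start \<open>lo < mid\<close> \<open>mid < hi\<close> by linarith
  then obtain s where s: "a < s" "s \<le> b" "inv (\<sigma> s) y = hi - 1"
    and below: "\<And>t. a \<le> t \<Longrightarrow> t < s \<Longrightarrow> inv (\<sigma> t) y < hi - 1"
    by (rule adjacent_walk_first_reach[OF walk _ finish]) (rule that)
  have "displaced (\<sigma> a) mid hi = {}"
    using clean \<open>lo < mid\<close> by (auto simp: displaced_def)
  then obtain r where r: "a \<le> r" "r \<le> s" "displaced (\<sigma> r) mid hi = {}"
    and upper_dirty: "\<And>t. r < t \<Longrightarrow> t \<le> s \<Longrightarrow> displaced (\<sigma> t) mid hi \<noteq> {}"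
    using greatest_before[of a s "\<lambda>t. displaced (\<sigma> t) mid hi = {}"] s(1) by auto
  have "r \<noteq> s"
    using inv_in_clean_window_iff[OF bij[of s] _, of mid hi y] s y r(3) \<open>lo < mid\<close> \<open>mid < hi\<close>
    by auto
  then have "inv (\<sigma> r) y < hi - 1"
    using below r by simp
  moreover have "inv (\<sigma> r) y \<notin> {mid..<hi}"
    using inv_in_clean_window_iff[OF bij r(3), of y] y r s \<open>lo < mid\<close> by auto
  ultimately have start_r: "inv (\<sigma> r) y < mid"
    by auto
  have subwalk: "adjacent_walk n \<sigma> r s"
    using adjacent_walk_subwalk[OF walk r(1,2) s(2)] .
  have finish_s: "hi - 1 \<le> inv (\<sigma> s) y"
    using s(3) by simp
  obtain t where "r < t" "t \<le> s" "Suc k < card (displaced (\<sigma> t) lo hi)"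
    by (rule crossing_bound_Suc_after_last_clean[OF IH sizes \<open>hi \<le> n\<close> subwalk y r(3) upper_dirty
          start_r finish_s])
  then show "\<exists>t\<in>{a<..b}. Suc k < card (displaced (\<sigma> t) lo hi)"
    using r s by auto
qed

lemma crossing_bound: "crossing_bound n k"
  by (induction k) (auto intro: crossing_bound_0 crossing_bound_Suc)

lemma swap_levels_eq_permute_list:
  assumes "Suc j < length xs"
  shows "swap_levels j (Suc j) xs = permute_list (transpose j (Suc j)) xs"
  using assms
  by (intro nth_equalityI) (auto simp: swap_levels_def permute_list_def transpose_def nth_list_update)

lemma ex_adjacent_walk_of_swap_levels:
  assumes "tau 0 = xs" "length xs = n"
    and "\<forall>s\<in>{1..N}. \<exists>j\<in>{1..n - 1}. tau s = swap_levels (j - 1) j (tau (s - 1))"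
  shows "\<exists>\<sigma>. adjacent_walk n \<sigma> 0 N \<and> \<sigma> 0 = id \<and> (\<forall>t\<le>N. tau t = permute_list (\<sigma> t) xs)"
  using assms(3)
proof (induction N)
  case 0
  show ?case
    using assms(1)
    by (intro exI[of _ "\<lambda>_. id"]) (simp add: adjacent_walk_def permutes_id[unfolded id_def])
next
  case (Suc N)
  have "\<forall>s\<in>{1..N}. \<exists>j\<in>{1..n - 1}. tau s = swap_levels (j - 1) j (tau (s - 1))"
    using Suc.prems by simp
  then obtain \<sigma> where walk: "adjacent_walk n \<sigma> 0 N" and "\<sigma> 0 = id"
    and tau: "\<forall>t\<le>N. tau t = permute_list (\<sigma> t) xs"
    using Suc.IH by blast
  obtain j where j: "1 \<le> j" "j < n" and step: "tau (Suc N) = swap_levels (j - 1) j (tau N)"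
    using bspec[OF Suc.prems, of "Suc N"] by auto
  define \<sigma>' where "\<sigma>' = \<sigma>(Suc N := \<sigma> N \<circ> transpose (j - 1) j)"
  have "adjacent_step n (\<sigma>' N) (\<sigma>' (Suc N))"
    using j unfolding adjacent_step_def \<sigma>'_def by (intro exI[of _ "j - 1"]) simp
  then have "adjacent_walk n \<sigma>' 0 (Suc N)"
    using walk unfolding adjacent_walk_def \<sigma>'_def by (auto simp: less_Suc_eq)
  moreover have "\<sigma>' 0 = id"
    using \<open>\<sigma> 0 = id\<close> by (simp add: \<sigma>'_def)
  moreover have "tau (Suc N) = permute_list (\<sigma>' (Suc N)) xs"
  proof -
    have "transpose (j - 1) j permutes {..<length xs}"
      using j assms(2) by (intro permutes_swap_id) auto
    moreover have "swap_levels (j - 1) j (tau N) = permute_list (transpose (j - 1) j) (tau N)"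
      using swap_levels_eq_permute_list[of "j - 1" "tau N"] j tau assms(2) by simp
    ultimately show ?thesis
      using step tau by (simp add: \<sigma>'_def permute_list_compose)
  qed
  then have "\<forall>t\<le>Suc N. tau t = permute_list (\<sigma>' t) xs"
    using tau by (auto simp: \<sigma>'_def le_Suc_eq)
  ultimately show ?case
    by blast
qed

lemma displaced_subset_mismatches:
  assumes "distinct xs" "f permutes {..<length xs}" "hi \<le> length xs"
  shows "displaced f lo hi \<subseteq> {l. l < length xs \<and> permute_list f xs ! l \<noteq> xs ! l}"
proof
  fix p assume "p \<in> displaced f lo hi"
  then have p: "p < length xs" "f p \<noteq> p"
    using assms(3) by (auto simp: displaced_def)
  moreover have "f p < length xs"
    using permutes_in_image[OF assms(2)] p(1) by simp
  ultimately show "p \<in> {l. l < length xs \<and> permute_list f xs ! l \<noteq> xs ! l}"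
    using assms(1,2) by (simp add: permute_list_nth nth_eq_iff_index_eq)
qed

lemma ex_power2_le_ln_le:
  assumes "1 \<le> L"
  obtains k where "2 ^ k \<le> L" "ln (real L) \<le> Suc k"
proof -
  obtain k where k: "2 ^ k \<le> L" "L < 2 ^ Suc k"
    using ex_power_ivl1[of 2 L] assms by auto
  have "ln (real L) < ln (2 ^ Suc k)"
    using k assms by (subst ln_less_cancel_iff) (auto simp del: power_Suc)
  also have "\<dots> = Suc k * ln 2"
    by (rule ln_realpow)
  also have "\<dots> \<le> Suc k"
    using ln_2_less_1 by (simp add: mult_left_le)
  finally show ?thesis
    using that k(1) by simp
qed

lemma adjacent_walk_bottom_to_top:
  assumes walk: "adjacent_walk (Suc L) \<sigma> 0 N" and "\<sigma> 0 = id" "\<sigma> N L = 0" "2 ^ k \<le> L"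
  obtains t where "t \<le> N" "k < card (displaced (\<sigma> t) 1 (Suc L))"
proof -
  have "inv (\<sigma> N) 0 = L"
    using permutes_inv_eq[OF adjacent_walk_permutes[OF walk]] assms(3) by simp
  then have "2 ^ k \<le> Suc L - 1" "displaced (\<sigma> 0) 1 (Suc L) = {}" "inv (\<sigma> 0) 0 < 1"
    "Suc L - 1 \<le> inv (\<sigma> N) 0"
    using assms(2,4) by (simp_all add: displaced_def)
  then show ?thesis
    using that by (elim crossing_boundD[OF crossing_bound _ order.refl walk]) simp
qed

theorem lemma9:
  shows "\<exists>c::real. c > 0 \<and>
    (\<forall>(L::nat) (m::nat) (lam::nat list) (tau::nat \<Rightarrow> nat list) (N::nat).
      L \<ge> 2 \<longrightarrow> length lam = L + 1 \<longrightarrow> set lam \<subseteq> {1..m} \<longrightarrow> distinct lam \<longrightarrow>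
      tau 0 = lam \<longrightarrow>
      (\<forall>s\<in>{1..N}. \<exists>j\<in>{1..L}. tau s = swap_levels (j - 1) j (tau (s - 1))) \<longrightarrow>
      tau N ! L = lam ! 0 \<longrightarrow>
      (\<exists>s\<le>N. real (card {l. l \<le> L \<and> tau s ! l \<noteq> lam ! l}) \<ge> c * ln (real L)))"
proof (rule exI[of _ 1], intro conjI allI impI)
  fix L m N :: nat and lam :: "nat list" and tau :: "nat \<Rightarrow> nat list"
  \<comment> \<open>Only distinctness of the entries matters, not their range {1..m}.\<close>
  assume L: "L \<ge> 2" and len: "length lam = L + 1" and "set lam \<subseteq> {1..m}"
    and dist: "distinct lam" and "tau 0 = lam"
    and "\<forall>s\<in>{1..N}. \<exists>j\<in>{1..L}. tau s = swap_levels (j - 1) j (tau (s - 1))"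
    and last: "tau N ! L = lam ! 0"
  then obtain \<sigma> where walk: "adjacent_walk (Suc L) \<sigma> 0 N" and "\<sigma> 0 = id"
    and tau: "\<forall>t\<le>N. tau t = permute_list (\<sigma> t) lam"
    using ex_adjacent_walk_of_swap_levels[of tau lam "Suc L" N] by auto
  have perm: "\<sigma> t permutes {..<length lam}" if "t \<le> N" for t
    using adjacent_walk_permutes[OF walk _ that] len by simp
  have "\<sigma> N L = 0"
    using last tau perm[of N] len dist permutes_in_image[OF perm[of N], of L]
    by (simp add: permute_list_nth nth_eq_iff_index_eq)
  obtain k where k: "2 ^ k \<le> L" "ln (real L) \<le> Suc k"
    using ex_power2_le_ln_le[of L] L by auto
  obtain t where t: "t \<le> N" "k < card (displaced (\<sigma> t) 1 (Suc L))"
    using adjacent_walk_bottom_to_top[OF walk \<open>\<sigma> 0 = id\<close> \<open>\<sigma> N L = 0\<close> k(1)] .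
  have "card (displaced (\<sigma> t) 1 (Suc L)) \<le> card {l. l \<le> L \<and> tau t ! l \<noteq> lam ! l}"
    using displaced_subset_mismatches[OF dist perm[OF t(1)], of "Suc L" 1] tau t(1) len
    by (intro card_mono) (auto simp: less_Suc_eq_le)
  then show "\<exists>s\<le>N. real (card {l. l \<le> L \<and> tau s ! l \<noteq> lam ! l}) \<ge> 1 * ln (real L)"
    using t k by (intro exI[of _ t]) auto
qed simp

end
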